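(* Let $K$ be an algebraically closed field of characteristic zero, let $X=X(N,\sigma)$ be an affine nonsingular toric variety over $K$ on which $K^*$ acts as the one-parameter subgroup corresponding to $a\in N$, and let $\alpha\in\mathbb Z$. Let $H_{\alpha,X}\subset\mathcal O_X$ be the ideal generated by all monomials $z^m$ ($m\in M\cap\sigma^\vee$) of $K^*$-character $\alpha$, i.e. with $(a,m)=\alpha$. Then $H_{\alpha,X}$ is a coherent $K^*$-equivariant ideal sheaf with $(H_{\alpha,X})_q=J_{\alpha,q}$ for every closed point $q\in X-F_X^*$; that is, $H_{\alpha,X}$ is the $\alpha$-torific ideal over $X$.
   Context: $M=\operatorname{Hom}(N,\mathbb Z)$, $X=\operatorname{Spec}K[M\cap\sigma^\vee]$, and $t\in K^*$ acts by $t^*(z^m)=t^{(a,m)}z^m$. Let $F_X=X^{K^*}$, $F_X^+=\{x:\lim_{t\to0}t(x)\in F_X\}$, $F_X^-=\{x:\lim_{t\to\infty}t(x)\in F_X\}$, $F_X^*=(F_X^+\cup F_X^-)-F_X$. For a closed point $q$ with stabilizer $G_q\subset K^*$, $J_{\alpha,q}\subset\mathcal O_{X,q}$ is the ideal generated by all $f\in\mathcal O_{X,q}$ with $t^*f=t^\alpha f$ for all $t\in G_q$. *)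

theory Defs
  imports "HOL-Analysis.Finite_Cartesian_Product" "HOL-Library.Poly_Mapping"
          "HOL-Computational_Algebra.Polynomial"
begin

text \<open>Lattices N = M = Z^n are modelled as int^'n; the pairing (a,m).\<close>
definition pairing :: "int^'n \<Rightarrow> int^'n \<Rightarrow> int" where
  "pairing a m = (\<Sum>i\<in>UNIV. a$i * m$i)"

definition Z_basis :: "(int^'n) set \<Rightarrow> bool" where
  "Z_basis B \<longleftrightarrow> finite B \<and> (\<forall>v::int^'n. \<exists>!c::int^'n \<Rightarrow> int.
      (\<forall>b. b \<notin> B \<longrightarrow> c b = 0) \<and> v = (\<Sum>b\<in>B. c b *s b))"

text \<open>sigma = cone(V) is nonsingular: V is part of a Z-basis of N.\<close>
definition nonsingular_gens :: "(int^'n) set \<Rightarrow> bool" where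
  "nonsingular_gens V \<longleftrightarrow> (\<exists>B. Z_basis B \<and> V \<subseteq> B)"

definition dual_semigroup :: "(int^'n) set \<Rightarrow> (int^'n) set" where
  "dual_semigroup V = {m. \<forall>v\<in>V. pairing v m \<ge> 0}"

definition coord_ring :: "(int^'n) set \<Rightarrow> ((int^'n) \<Rightarrow>\<^sub>0 'K::field) set" where
  "coord_ring V = {f. Poly_Mapping.keys f \<subseteq> dual_semigroup V}"

definition monom :: "int^'n \<Rightarrow> (int^'n) \<Rightarrow>\<^sub>0 'K::field" where
  "monom m = Poly_Mapping.single m 1"

text \<open>Closed points of X = Spec K[S] (K algebraically closed): semigroup homomorphisms S \<rightarrow> (K,*)
  sending 0 to 1, extended by 0 outside S.\<close>
definition toric_points :: "(int^'n) set \<Rightarrow> ((int^'n) \<Rightarrow> 'K::field) set" where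
  "toric_points V = {x. x 0 = 1 \<and>
     (\<forall>m\<in>dual_semigroup V. \<forall>m'\<in>dual_semigroup V. x (m + m') = x m * x m') \<and>
     (\<forall>m. m \<notin> dual_semigroup V \<longrightarrow> x m = 0)}"

definition eval_at :: "((int^'n) \<Rightarrow>\<^sub>0 'K::field) \<Rightarrow> ((int^'n) \<Rightarrow> 'K) \<Rightarrow> 'K" where
  "eval_at f x = (\<Sum>m\<in>Poly_Mapping.keys f. Poly_Mapping.lookup f m * x m)"

definition act :: "int^'n \<Rightarrow> 'K::field \<Rightarrow> ((int^'n) \<Rightarrow> 'K) \<Rightarrow> ((int^'n) \<Rightarrow> 'K)" where
  "act a t x = (\<lambda>m. t powi (pairing a m) * x m)"

definition tstar :: "int^'n \<Rightarrow> 'K::field \<Rightarrow> ((int^'n) \<Rightarrow>\<^sub>0 'K) \<Rightarrow> ((int^'n) \<Rightarrow>\<^sub>0 'K)" where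
  "tstar a t f = (\<Sum>m\<in>Poly_Mapping.keys f. Poly_Mapping.single m (t powi (pairing a m) * Poly_Mapping.lookup f m))"

definition scal :: "'K::field \<Rightarrow> ((int^'n) \<Rightarrow>\<^sub>0 'K) \<Rightarrow> ((int^'n) \<Rightarrow>\<^sub>0 'K)" where
  "scal c f = Poly_Mapping.single 0 c * f"

definition fixed_pts :: "(int^'n) set \<Rightarrow> int^'n \<Rightarrow> ((int^'n) \<Rightarrow> 'K::field) set" where
  "fixed_pts V a = {x\<in>toric_points V. \<forall>t. t \<noteq> 0 \<longrightarrow> act a t x = x}"

text \<open>lim_{t\<rightarrow>0} g(t) = p, for a map g: K^* \<rightarrow> X: the map extends to a morphism A^1 \<rightarrow> X
  (all coordinate functions z^m are polynomial in t) whose value at 0 is p.\<close>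
definition has_limit_at_0 :: "(int^'n) set \<Rightarrow> ('K::field \<Rightarrow> (int^'n) \<Rightarrow> 'K) \<Rightarrow> ((int^'n) \<Rightarrow> 'K) \<Rightarrow> bool" where
  "has_limit_at_0 V g p \<longleftrightarrow> p \<in> toric_points V \<and>
     (\<exists>P :: int^'n \<Rightarrow> 'K poly. \<forall>m\<in>dual_semigroup V.
        (\<forall>t. t \<noteq> 0 \<longrightarrow> poly (P m) t = g t m) \<and> poly (P m) 0 = p m)"

definition F_plus :: "(int^'n) set \<Rightarrow> int^'n \<Rightarrow> ((int^'n) \<Rightarrow> 'K::field) set" where
  "F_plus V a = {x\<in>toric_points V. \<exists>p\<in>fixed_pts V a. has_limit_at_0 V (\<lambda>t. act a t x) p}"

text \<open>t \<rightarrow> \<infinity> is s = 1/t \<rightarrow> 0.\<close>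
definition F_minus :: "(int^'n) set \<Rightarrow> int^'n \<Rightarrow> ((int^'n) \<Rightarrow> 'K::field) set" where
  "F_minus V a = {x\<in>toric_points V. \<exists>p\<in>fixed_pts V a.
       has_limit_at_0 V (\<lambda>s. act a (inverse s) x) p}"

definition F_star :: "(int^'n) set \<Rightarrow> int^'n \<Rightarrow> ((int^'n) \<Rightarrow> 'K::field) set" where
  "F_star V a = (F_plus V a \<union> F_minus V a) - fixed_pts V a"

definition stabilizer :: "int^'n \<Rightarrow> ((int^'n) \<Rightarrow> 'K::field) \<Rightarrow> 'K set" where
  "stabilizer a q = {t. t \<noteq> 0 \<and> act a t q = q}"

text \<open>Local ring O_{X,q}: fractions f/g with f,g \<in> K[S], g(q) \<noteq> 0, represented as pairs;
  two representatives are equal in O_{X,q} iff f*g' = f'*g (K[S] is a domain).\<close>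
definition local_ring :: "(int^'n) set \<Rightarrow> ((int^'n) \<Rightarrow> 'K::field)
    \<Rightarrow> (((int^'n) \<Rightarrow>\<^sub>0 'K) \<times> ((int^'n) \<Rightarrow>\<^sub>0 'K)) set" where
  "local_ring V q = {(f,g). f \<in> coord_ring V \<and> g \<in> coord_ring V \<and> eval_at g q \<noteq> 0}"

definition frac_eq :: "(((int^'n) \<Rightarrow>\<^sub>0 'K::field) \<times> ((int^'n) \<Rightarrow>\<^sub>0 'K))
    \<Rightarrow> (((int^'n) \<Rightarrow>\<^sub>0 'K) \<times> ((int^'n) \<Rightarrow>\<^sub>0 'K)) \<Rightarrow> bool" where
  "frac_eq F G \<longleftrightarrow> fst F * snd G = fst G * snd F"

definition frac_add where
  "frac_add F G = (fst F * snd G + fst G * snd F, snd F * snd G)"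

definition frac_mult where
  "frac_mult F G = (fst F * fst G, snd F * snd G)"

text \<open>The ideal of O_{X,q} generated by a subset A \<subseteq> O_{X,q} (as a set of representatives,
  closed under equality of fractions).\<close>
inductive_set local_ideal_gen :: "(int^'n) set \<Rightarrow> ((int^'n) \<Rightarrow> 'K::field)
    \<Rightarrow> (((int^'n) \<Rightarrow>\<^sub>0 'K) \<times> ((int^'n) \<Rightarrow>\<^sub>0 'K)) set
    \<Rightarrow> (((int^'n) \<Rightarrow>\<^sub>0 'K) \<times> ((int^'n) \<Rightarrow>\<^sub>0 'K)) set"
  for V q A where
  zero: "(0, 1) \<in> local_ideal_gen V q A"
| step: "\<lbrakk>r \<in> local_ring V q; b \<in> A; F \<in> local_ideal_gen V q A\<rbrakk>
          \<Longrightarrow> frac_add (frac_mult r b) F \<in> local_ideal_gen V q A"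
| equiv: "\<lbrakk>F \<in> local_ideal_gen V q A; G \<in> local_ring V q; frac_eq G F\<rbrakk>
          \<Longrightarrow> G \<in> local_ideal_gen V q A"

inductive_set ring_ideal_gen :: "(int^'n) set \<Rightarrow> ((int^'n) \<Rightarrow>\<^sub>0 'K::field) set
    \<Rightarrow> ((int^'n) \<Rightarrow>\<^sub>0 'K) set"
  for V A where
  zero: "0 \<in> ring_ideal_gen V A"
| step: "\<lbrakk>r \<in> coord_ring V; b \<in> A; f \<in> ring_ideal_gen V A\<rbrakk>
          \<Longrightarrow> r * b + f \<in> ring_ideal_gen V A"

definition H_gens :: "(int^'n) set \<Rightarrow> int^'n \<Rightarrow> int \<Rightarrow> ((int^'n) \<Rightarrow>\<^sub>0 'K::field) set" where
  "H_gens V a \<alpha> = {monom m | m. m \<in> dual_semigroup V \<and> pairing a m = \<alpha>}"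

definition semi_inv_local :: "(int^'n) set \<Rightarrow> int^'n \<Rightarrow> int \<Rightarrow> ((int^'n) \<Rightarrow> 'K::field)
    \<Rightarrow> (((int^'n) \<Rightarrow>\<^sub>0 'K) \<times> ((int^'n) \<Rightarrow>\<^sub>0 'K)) set" where
  "semi_inv_local V a \<alpha> q = {F\<in>local_ring V q. \<forall>t\<in>stabilizer a q.
       frac_eq (tstar a t (fst F), tstar a t (snd F)) (scal (t powi \<alpha>) (fst F), snd F)}"

definition J_ideal where
  "J_ideal V a \<alpha> q = local_ideal_gen V q (semi_inv_local V a \<alpha> q)"

text \<open>Stalk (H_{alpha,X})_q = H_{alpha,X} \<cdot> O_{X,q}.\<close>
definition H_stalk where
  "H_stalk V a \<alpha> q = local_ideal_gen V q {(h, 1) | h. h \<in> H_gens V a \<alpha>}"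

end

theory Submission
  imports Defs
begin

text \<open>H is generated by monomials, so Dickson's lemma makes it finitely generated, and t^* scales
  each generator z^m by t^\<alpha>, so H is K^*-stable.

  For the stalks, let W be the set of weights (a,m) of the monomials z^m that do not vanish at q;
  it is a submonoid of Z. If q lies outside F_X^*, then either W = 0 or W contains weights of both
  signs (otherwise the orbit of q would converge as t tends to 0 or to infinity), so W = dZ and
  G_q is the group of d-th roots of unity (all of K^* if d = 0). By linear independence of the
  characters of G_q, a semi-invariant fraction g/h equals g'/h', where g' keeps the monomials of g
  of weight congruent to \<alpha> mod d and h' those of h of weight divisible by d; in particular
  h'(q) = h(q). Finally each monomial z^m of g' equals z^(m+u)/z^u for a unit z^u at q of weight
  \<alpha> - (a,m), and z^(m+u) is a generator of H.\<close>

section \<open>Monomials and the coordinate ring\<close>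

lemma pairing_add: "pairing a (m + m') = pairing a m + pairing a m'"
  by (simp add: pairing_def distrib_left sum.distrib)

lemma pairing_diff: "pairing a (m - m') = pairing a m - pairing a m'"
  by (simp add: pairing_def right_diff_distrib sum_subtractf)

lemma pairing_zero [simp]: "pairing a 0 = 0"
  by (simp add: pairing_def)

lemma pairing_uminus_left: "pairing (- a) m = - pairing a m"
  by (simp add: pairing_def sum_negf)

lemma zero_in_dual_semigroup [simp]: "0 \<in> dual_semigroup V"
  by (simp add: dual_semigroup_def)

lemma add_in_dual_semigroup:
  "m \<in> dual_semigroup V \<Longrightarrow> m' \<in> dual_semigroup V \<Longrightarrow> m + m' \<in> dual_semigroup V"
  by (auto simp: dual_semigroup_def pairing_add)

lemma poly_mapping_eq_sum_single:
  assumes "finite A" "Poly_Mapping.keys f \<subseteq> A"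
  shows "f = (\<Sum>l\<in>A. Poly_Mapping.single l (Poly_Mapping.lookup f l))"
proof (rule poly_mapping_eqI)
  fix k
  have "(\<Sum>l\<in>A. Poly_Mapping.lookup (Poly_Mapping.single l (Poly_Mapping.lookup f l)) k)
      = (\<Sum>l\<in>A. if l = k then Poly_Mapping.lookup f l else 0)"
    by (intro sum.cong) (auto simp: lookup_single)
  also have "\<dots> = Poly_Mapping.lookup f k"
    using assms by (auto simp: in_keys_iff)
  finally show "Poly_Mapping.lookup f k
      = Poly_Mapping.lookup (\<Sum>l\<in>A. Poly_Mapping.single l (Poly_Mapping.lookup f l)) k"
    by (simp add: lookup_sum)
qed

lemma mult_eq_sum_single:
  fixes f g :: "'a::comm_monoid_add \<Rightarrow>\<^sub>0 'b::comm_semiring_1"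
  assumes "finite A" "Poly_Mapping.keys f \<subseteq> A" "finite B" "Poly_Mapping.keys g \<subseteq> B"
  shows "f * g = (\<Sum>l\<in>A. \<Sum>p\<in>B.
           Poly_Mapping.single (l + p) (Poly_Mapping.lookup f l * Poly_Mapping.lookup g p))"
proof -
  have "f * g = (\<Sum>l\<in>A. Poly_Mapping.single l (Poly_Mapping.lookup f l))
      * (\<Sum>p\<in>B. Poly_Mapping.single p (Poly_Mapping.lookup g p))"
    using poly_mapping_eq_sum_single[OF assms(1,2)] poly_mapping_eq_sum_single[OF assms(3,4)] by simp
  then show ?thesis
    unfolding sum_distrib_right unfolding sum_distrib_left mult_single .
qed

lemma lookup_mult_eq_sum_pairs:
  fixes f g :: "'a::comm_monoid_add \<Rightarrow>\<^sub>0 'b::comm_semiring_1"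
  assumes "finite A" "Poly_Mapping.keys f \<subseteq> A" "finite B" "Poly_Mapping.keys g \<subseteq> B"
  shows "Poly_Mapping.lookup (f * g) k = (\<Sum>(l, p)\<in>A \<times> B.
           if l + p = k then Poly_Mapping.lookup f l * Poly_Mapping.lookup g p else 0)"
  by (subst mult_eq_sum_single[OF assms])
     (simp add: lookup_sum lookup_single when_def sum.cartesian_product')

lemma lookup_mult_rescaled:
  fixes f g :: "'a::comm_monoid_add \<Rightarrow>\<^sub>0 'b::comm_semiring_1"
  assumes "finite A" "Poly_Mapping.keys f \<subseteq> A" "finite B" "Poly_Mapping.keys g \<subseteq> B"
    and f': "\<And>l. Poly_Mapping.lookup f' l = u l * Poly_Mapping.lookup f l"
    and g': "\<And>p. Poly_Mapping.lookup g' p = v p * Poly_Mapping.lookup g p"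
  shows "Poly_Mapping.lookup (f' * g') k = (\<Sum>(l, p)\<in>A \<times> B.
           (if l + p = k then Poly_Mapping.lookup f l * Poly_Mapping.lookup g p else 0) * (u l * v p))"
proof -
  have "Poly_Mapping.keys f' \<subseteq> A" "Poly_Mapping.keys g' \<subseteq> B"
    using assms(2,4) by (auto simp: f' g' in_keys_iff subset_iff) (metis mult_zero_right)+
  then show ?thesis
    using assms(1,3) by (subst lookup_mult_eq_sum_pairs) (auto simp: f' g' mult_ac intro!: sum.cong)
qed

lemma coord_ring_zero [simp]: "0 \<in> coord_ring V"
  by (simp add: coord_ring_def)

lemma coord_ring_one [simp]: "1 \<in> coord_ring V"
  by (simp add: coord_ring_def)

lemma coord_ring_add: "f \<in> coord_ring V \<Longrightarrow> g \<in> coord_ring V \<Longrightarrow> f + g \<in> coord_ring V"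
  using keys_add[of f g] by (auto simp: coord_ring_def)

lemma coord_ring_mult: "f \<in> coord_ring V \<Longrightarrow> g \<in> coord_ring V \<Longrightarrow> f * g \<in> coord_ring V"
  using keys_mult[of f g] by (fastforce simp: coord_ring_def intro: add_in_dual_semigroup)

lemma coord_ring_single: "m \<in> dual_semigroup V \<Longrightarrow> Poly_Mapping.single m c \<in> coord_ring V"
  by (simp add: coord_ring_def)

lemma coord_ring_monom: "m \<in> dual_semigroup V \<Longrightarrow> monom m \<in> coord_ring V"
  by (simp add: monom_def coord_ring_single)

lemma coord_ring_sum: "(\<And>m. m \<in> M \<Longrightarrow> f m \<in> coord_ring V) \<Longrightarrow> sum f M \<in> coord_ring V"
  by (induction M rule: infinite_finite_induct) (auto intro: coord_ring_add)

lemma eval_at_eq_sum_superset: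
  assumes "finite A" "Poly_Mapping.keys f \<subseteq> A"
  shows "eval_at f x = (\<Sum>m\<in>A. Poly_Mapping.lookup f m * x m)"
  unfolding eval_at_def using assms
  by (intro sum.mono_neutral_left) (auto simp: not_in_keys_iff_lookup_eq_zero)

lemma eval_at_add: "eval_at (f + g) x = eval_at f x + eval_at g x"
proof -
  let ?A = "Poly_Mapping.keys f \<union> Poly_Mapping.keys g"
  have "eval_at (f + g) x = (\<Sum>m\<in>?A. Poly_Mapping.lookup (f + g) m * x m)"
    using keys_add[of f g] by (intro eval_at_eq_sum_superset) auto
  also have "\<dots> = (\<Sum>m\<in>?A. Poly_Mapping.lookup f m * x m) + (\<Sum>m\<in>?A. Poly_Mapping.lookup g m * x m)"
    by (simp add: lookup_add distrib_right sum.distrib)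
  also have "\<dots> = eval_at f x + eval_at g x"
    by (simp add: eval_at_eq_sum_superset[of ?A])
  finally show ?thesis .
qed

lemma eval_at_zero [simp]: "eval_at 0 x = 0"
  by (simp add: eval_at_def)

lemma eval_at_sum: "eval_at (\<Sum>l\<in>L. f l) x = (\<Sum>l\<in>L. eval_at (f l) x)"
  by (induction L rule: infinite_finite_induct) (auto simp: eval_at_add)

lemma eval_at_single: "eval_at (Poly_Mapping.single m c) x = c * x m"
  by (simp add: eval_at_def)

lemma eval_at_one: "x \<in> toric_points V \<Longrightarrow> eval_at 1 x = 1"
  by (simp add: eval_at_def toric_points_def)

lemma eval_at_mult:
  assumes "f \<in> coord_ring V" "g \<in> coord_ring V" "x \<in> toric_points V"
  shows "eval_at (f * g) x = eval_at f x * eval_at g x"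
proof -
  let ?A = "Poly_Mapping.keys f" and ?B = "Poly_Mapping.keys g"
  have "eval_at (f * g) x
      = (\<Sum>l\<in>?A. \<Sum>p\<in>?B. Poly_Mapping.lookup f l * Poly_Mapping.lookup g p * x (l + p))"
    by (subst mult_eq_sum_single[of ?A f ?B g]) (simp_all add: eval_at_sum eval_at_single)
  also have "\<dots> = (\<Sum>l\<in>?A. \<Sum>p\<in>?B.
      (Poly_Mapping.lookup f l * x l) * (Poly_Mapping.lookup g p * x p))"
    using assms by (intro sum.cong refl) (auto simp: coord_ring_def toric_points_def)
  also have "\<dots> = eval_at f x * eval_at g x"
    by (simp add: eval_at_def sum_product)
  finally show ?thesis .
qed

lemma lookup_tstar:
  "Poly_Mapping.lookup (tstar a t f) m = t powi pairing a m * Poly_Mapping.lookup f m"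
proof -
  have "Poly_Mapping.lookup (tstar a t f) m = (\<Sum>m'\<in>Poly_Mapping.keys f.
      if m' = m then t powi pairing a m' * Poly_Mapping.lookup f m' else 0)"
    unfolding tstar_def lookup_sum by (intro sum.cong) (auto simp: lookup_single)
  then show ?thesis
    by (auto simp: in_keys_iff)
qed

lemma keys_tstar_subset: "Poly_Mapping.keys (tstar a t f) \<subseteq> Poly_Mapping.keys f"
  by (auto simp: in_keys_iff lookup_tstar)

lemma tstar_in_coord_ring: "f \<in> coord_ring V \<Longrightarrow> tstar a t f \<in> coord_ring V"
  using keys_tstar_subset unfolding coord_ring_def by blast

lemma tstar_zero [simp]: "tstar a t 0 = 0"
  by (simp add: tstar_def)

lemma tstar_one: "tstar a t 1 = 1"
  by (rule poly_mapping_eqI) (simp add: lookup_tstar lookup_one when_def)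

lemma tstar_add: "tstar a t (f + g) = tstar a t f + tstar a t g"
  by (rule poly_mapping_eqI) (simp add: lookup_tstar lookup_add distrib_left)

lemma tstar_mult:
  assumes "t \<noteq> 0"
  shows "tstar a t (f * g) = tstar a t f * tstar a t g"
proof (rule poly_mapping_eqI)
  fix k
  let ?A = "Poly_Mapping.keys f" and ?B = "Poly_Mapping.keys g"
  have "Poly_Mapping.lookup (tstar a t f * tstar a t g) k = (\<Sum>(l, p)\<in>?A \<times> ?B.
      (if l + p = k then Poly_Mapping.lookup f l * Poly_Mapping.lookup g p else 0)
        * (t powi pairing a l * t powi pairing a p))"
    by (rule lookup_mult_rescaled) (simp_all add: lookup_tstar)
  also have "\<dots> = t powi pairing a k * (\<Sum>(l, p)\<in>?A \<times> ?B.
      if l + p = k then Poly_Mapping.lookup f l * Poly_Mapping.lookup g p else 0)"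
    unfolding sum_distrib_left
    by (intro sum.cong refl) (auto simp: pairing_add power_int_add assms)
  also have "\<dots> = Poly_Mapping.lookup (tstar a t (f * g)) k"
    by (simp add: lookup_tstar lookup_mult_eq_sum_pairs[of ?A f ?B g])
  finally show "Poly_Mapping.lookup (tstar a t (f * g)) k
      = Poly_Mapping.lookup (tstar a t f * tstar a t g) k" ..
qed

lemma tstar_monom: "tstar a t (monom m) = Poly_Mapping.single m (t powi pairing a m)"
  by (rule poly_mapping_eqI) (simp add: lookup_tstar monom_def lookup_single when_def)

lemma lookup_scal: "Poly_Mapping.lookup (scal c f) k = c * Poly_Mapping.lookup f k"
  unfolding scal_def mult_map_scale_conv_mult[symmetric] by transfer (simp add: when_def)

lemma ring_ideal_gen_add:
  assumes "f \<in> ring_ideal_gen V A" "g \<in> ring_ideal_gen V A"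
  shows "f + g \<in> ring_ideal_gen V A"
  using assms(1)
proof (induction rule: ring_ideal_gen.induct)
  case (step r b f)
  then show ?case
    using ring_ideal_gen.step[of r V b A "f + g"] by (simp add: add.assoc)
qed (simp add: assms(2))

lemma ring_ideal_gen_mult:
  assumes "f \<in> ring_ideal_gen V A" "r \<in> coord_ring V"
  shows "r * f \<in> ring_ideal_gen V A"
  using assms(1)
proof (induction rule: ring_ideal_gen.induct)
  case (step s b f)
  have "r * (s * b + f) = (r * s) * b + r * f"
    by (simp add: algebra_simps)
  then show ?case
    using ring_ideal_gen.step[OF coord_ring_mult[OF assms(2) step.hyps(1)] step.hyps(2) step.IH]
    by simp
qed (simp add: ring_ideal_gen.zero)

lemma ring_ideal_gen_base: "b \<in> A \<Longrightarrow> b \<in> ring_ideal_gen V A"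
  using ring_ideal_gen.step[OF coord_ring_one _ ring_ideal_gen.zero] by simp

lemma ring_ideal_gen_subset:
  assumes "A \<subseteq> ring_ideal_gen V B"
  shows "ring_ideal_gen V A \<subseteq> ring_ideal_gen V B"
proof
  fix f
  assume "f \<in> ring_ideal_gen V A"
  then show "f \<in> ring_ideal_gen V B"
    by (induction rule: ring_ideal_gen.induct)
       (use assms in \<open>auto intro: ring_ideal_gen.zero ring_ideal_gen_add ring_ideal_gen_mult\<close>)
qed

section \<open>Finite generation and equivariance of H\<close>

lemma dickson_insert:
  fixes \<phi> :: "'b \<Rightarrow> 'i \<Rightarrow> nat"
  assumes IH: "\<And>Y. \<exists>F\<subseteq>Y. finite F \<and> (\<forall>y\<in>Y. \<exists>f\<in>F. \<forall>i\<in>I. \<phi> f i \<le> \<phi> y i)"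
  shows "\<exists>F\<subseteq>X. finite F \<and> (\<forall>x\<in>X. \<exists>f\<in>F. \<forall>i\<in>insert j I. \<phi> f i \<le> \<phi> x i)"
proof -
  obtain F0 where F0: "F0 \<subseteq> X" "finite F0" "\<forall>x\<in>X. \<exists>f\<in>F0. \<forall>i\<in>I. \<phi> f i \<le> \<phi> x i"
    using IH[of X] by meson
  define c0 where "c0 = Max (insert 0 ((\<lambda>f. \<phi> f j) ` F0))"
  have c0: "\<phi> f j \<le> c0" if "f \<in> F0" for f
    unfolding c0_def using F0(2) that by (intro Max_ge) auto
  \<comment> \<open>F0 handles every x with \<phi> x j \<ge> c0; each of the finitely many levels below c0 is handled
    by its own finite set\<close>
  have "\<forall>c. \<exists>F\<subseteq>{x\<in>X. \<phi> x j = c}. finite F \<and>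
      (\<forall>x\<in>{x\<in>X. \<phi> x j = c}. \<exists>f\<in>F. \<forall>i\<in>I. \<phi> f i \<le> \<phi> x i)"
    by (intro allI IH)
  from choice[OF this] obtain Fc where Fc: "\<forall>c. Fc c \<subseteq> {x\<in>X. \<phi> x j = c} \<and> finite (Fc c) \<and>
      (\<forall>x\<in>{x\<in>X. \<phi> x j = c}. \<exists>f\<in>Fc c. \<forall>i\<in>I. \<phi> f i \<le> \<phi> x i)"
    by blast
  show ?thesis
  proof (intro exI[of _ "F0 \<union> (\<Union>c<c0. Fc c)"] conjI ballI)
    show "F0 \<union> (\<Union>c<c0. Fc c) \<subseteq> X" "finite (F0 \<union> (\<Union>c<c0. Fc c))"
      using F0(1,2) Fc by auto
    fix x
    assume x: "x \<in> X"
    show "\<exists>f\<in>F0 \<union> (\<Union>c<c0. Fc c). \<forall>i\<in>insert j I. \<phi> f i \<le> \<phi> x i"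
    proof (cases "\<phi> x j < c0")
      case True
      obtain f where f: "f \<in> Fc (\<phi> x j)" "\<forall>i\<in>I. \<phi> f i \<le> \<phi> x i"
        using Fc x by blast
      moreover have "\<phi> f j = \<phi> x j"
        using Fc f(1) by blast
      moreover have "f \<in> (\<Union>c<c0. Fc c)"
        using True f(1) by auto
      ultimately show ?thesis
        by (intro bexI[of _ f]) auto
    next
      case False
      obtain f where "f \<in> F0" "\<forall>i\<in>I. \<phi> f i \<le> \<phi> x i"
        using F0(3) x by blast
      moreover have "\<phi> f j \<le> \<phi> x j"
        using c0[OF calculation(1)] False by linarith
      ultimately show ?thesis
        by blast
    qed
  qed
qed

lemma dickson:
  fixes \<phi> :: "'b \<Rightarrow> 'i \<Rightarrow> nat"
  assumes "finite I"
  shows "\<exists>F\<subseteq>X. finite F \<and> (\<forall>x\<in>X. \<exists>f\<in>F. \<forall>i\<in>I. \<phi> f i \<le> \<phi> x i)"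
  using assms
proof (induction I arbitrary: X rule: finite_induct)
  case empty
  show ?case
  proof (cases "X = {}")
    case False
    then obtain x0 where "x0 \<in> X"
      by blast
    then show ?thesis
      by (intro exI[of _ "{x0}"]) auto
  qed auto
next
  case (insert j I)
  then show ?case
    by (intro dickson_insert) blast
qed

lemma monomial_ideal_finitely_generated:
  assumes "finite V" "T \<subseteq> dual_semigroup V"
  shows "\<exists>F\<subseteq>T. finite F \<and>
    ring_ideal_gen V (monom ` F) = ring_ideal_gen V (monom ` T :: ((int^'n) \<Rightarrow>\<^sub>0 'K::field) set)"
proof -
  obtain F where F: "F \<subseteq> T" "finite F"
    and below: "\<forall>m\<in>T. \<exists>f\<in>F. \<forall>v\<in>V. nat (pairing v f) \<le> nat (pairing v m)"
    using dickson[OF assms(1), of T "\<lambda>m v. nat (pairing v m)"] by blast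
  have "monom m \<in> ring_ideal_gen V (monom ` F :: ((int^'n) \<Rightarrow>\<^sub>0 'K) set)" if m: "m \<in> T" for m
  proof -
    obtain f where f: "f \<in> F" "\<forall>v\<in>V. nat (pairing v f) \<le> nat (pairing v m)"
      using below m by blast
    have "f \<in> dual_semigroup V" "m \<in> dual_semigroup V"
      using F(1) f(1) m assms(2) by auto
    then have "m - f \<in> dual_semigroup V"
      using f(2) by (auto simp: dual_semigroup_def pairing_diff nat_le_eq_zle)
    then have "monom (m - f) * monom f \<in> ring_ideal_gen V (monom ` F :: ((int^'n) \<Rightarrow>\<^sub>0 'K) set)"
      using f(1) by (intro ring_ideal_gen_mult ring_ideal_gen_base coord_ring_monom) auto
    then show ?thesis
      by (simp add: monom_def mult_single)
  qed
  then have "ring_ideal_gen V (monom ` T) \<subseteq> ring_ideal_gen V (monom ` F :: ((int^'n) \<Rightarrow>\<^sub>0 'K) set)"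
    by (intro ring_ideal_gen_subset) blast
  moreover have "ring_ideal_gen V (monom ` F) \<subseteq> ring_ideal_gen V (monom ` T :: ((int^'n) \<Rightarrow>\<^sub>0 'K) set)"
    using F(1) by (intro ring_ideal_gen_subset) (auto intro: ring_ideal_gen_base)
  ultimately show ?thesis
    using F by blast
qed

lemma H_gens_eq_image: "H_gens V a \<alpha> = monom ` {m \<in> dual_semigroup V. pairing a m = \<alpha>}"
  by (auto simp: H_gens_def)

lemma tstar_in_H_ideal:
  assumes "t \<noteq> 0" "f \<in> ring_ideal_gen V (H_gens V a \<alpha> :: ((int^'n) \<Rightarrow>\<^sub>0 'K::field) set)"
  shows "tstar a t f \<in> ring_ideal_gen V (H_gens V a \<alpha>)"
  using assms(2)
proof (induction rule: ring_ideal_gen.induct)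
  case (step r b f)
  obtain m where m: "b = monom m" "pairing a m = \<alpha>"
    using step.hyps(2) unfolding H_gens_def by blast
  have "tstar a t b = Poly_Mapping.single 0 (t powi \<alpha>) * b"
    using tstar_monom[of a t m] by (simp add: m monom_def mult_single)
  then have "tstar a t (r * b + f) = (tstar a t r * Poly_Mapping.single 0 (t powi \<alpha>)) * b + tstar a t f"
    by (simp add: tstar_add tstar_mult[OF assms(1)] mult.assoc)
  moreover have "tstar a t r * Poly_Mapping.single 0 (t powi \<alpha>) \<in> coord_ring V"
    by (intro coord_ring_mult tstar_in_coord_ring step.hyps(1) coord_ring_single zero_in_dual_semigroup)
  ultimately show ?case
    using ring_ideal_gen.step[OF _ step.hyps(2) step.IH] by simp
qed (simp add: ring_ideal_gen.zero)

section \<open>Localization at a point\<close>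

lemma local_ring_zero: "q \<in> toric_points V \<Longrightarrow> (0, 1) \<in> local_ring V q"
  by (simp add: local_ring_def eval_at_one)

lemma local_ring_add:
  "q \<in> toric_points V \<Longrightarrow> F \<in> local_ring V q \<Longrightarrow> G \<in> local_ring V q \<Longrightarrow> frac_add F G \<in> local_ring V q"
  by (auto simp: local_ring_def frac_add_def eval_at_mult coord_ring_add coord_ring_mult)

lemma local_ring_mult:
  "q \<in> toric_points V \<Longrightarrow> F \<in> local_ring V q \<Longrightarrow> G \<in> local_ring V q \<Longrightarrow> frac_mult F G \<in> local_ring V q"
  by (auto simp: local_ring_def frac_mult_def eval_at_mult coord_ring_mult)

lemma local_ideal_gen_subset_local_ring:
  assumes "q \<in> toric_points V" "A \<subseteq> local_ring V q"
  shows "local_ideal_gen V q A \<subseteq> local_ring V q"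
proof
  fix F
  assume "F \<in> local_ideal_gen V q A"
  then show "F \<in> local_ring V q"
    by (induction rule: local_ideal_gen.induct)
       (use assms local_ring_zero local_ring_add local_ring_mult in blast)+
qed

lemma local_ideal_gen_mono:
  assumes "A \<subseteq> B"
  shows "local_ideal_gen V q A \<subseteq> local_ideal_gen V q B"
proof
  fix F
  assume "F \<in> local_ideal_gen V q A"
  then show "F \<in> local_ideal_gen V q B"
    by (induction rule: local_ideal_gen.induct) (use assms in \<open>auto intro: local_ideal_gen.intros\<close>)
qed

lemma frac_eq_add_mult_zero: "frac_eq (frac_add (frac_mult r (0, 1)) F) F"
  by (simp add: frac_eq_def frac_add_def frac_mult_def algebra_simps)

lemma frac_eq_add_mult_add:
  "frac_eq (frac_add (frac_mult r (frac_add (frac_mult s h) b)) F)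
           (frac_add (frac_mult (frac_mult r s) h) (frac_add (frac_mult r b) F))"
  by (simp add: frac_eq_def frac_add_def frac_mult_def algebra_simps)

lemma frac_eq_add_mult_cong:
  assumes "frac_eq b b'"
  shows "frac_eq (frac_add (frac_mult r b) F) (frac_add (frac_mult r b') F)"
proof -
  have "fst b * snd b' = fst b' * snd b"
    using assms by (simp add: frac_eq_def)
  then show ?thesis
    unfolding frac_eq_def frac_add_def frac_mult_def fst_conv snd_conv
    by (simp add: algebra_simps) (metis (no_types, lifting) mult.assoc mult.left_commute)
qed

lemma local_ideal_gen_closed:
  assumes q: "q \<in> toric_points V" and A: "A \<subseteq> local_ring V q"
    and b: "b \<in> local_ideal_gen V q A" and F: "F \<in> local_ideal_gen V q A"
    and r: "r \<in> local_ring V q"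
  shows "frac_add (frac_mult r b) F \<in> local_ideal_gen V q A"
proof -
  have F_local: "F \<in> local_ring V q"
    using local_ideal_gen_subset_local_ring[OF q A] F by blast
  show ?thesis
    using b r
  proof (induction arbitrary: r rule: local_ideal_gen.induct)
    case (zero r)
    have "frac_add (frac_mult r (0, 1)) F \<in> local_ring V q"
      using zero F_local q by (simp add: local_ring_add local_ring_mult local_ring_zero)
    then show ?case
      using local_ideal_gen.equiv[OF F _ frac_eq_add_mult_zero] by blast
  next
    case (step s h b r)
    have "frac_add (frac_mult (frac_mult r s) h) (frac_add (frac_mult r b) F)
        \<in> local_ideal_gen V q A"
      by (rule local_ideal_gen.step[OF local_ring_mult[OF q step.prems step.hyps(1)] step.hyps(2)
            step.IH[OF step.prems]])
    moreover have "h \<in> local_ring V q" "b \<in> local_ring V q"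
      using step.hyps A local_ideal_gen_subset_local_ring[OF q A] by blast+
    then have "frac_add (frac_mult r (frac_add (frac_mult s h) b)) F \<in> local_ring V q"
      using step.prems step.hyps(1) F_local q by (simp add: local_ring_add local_ring_mult)
    ultimately show ?case
      by (blast intro: local_ideal_gen.equiv frac_eq_add_mult_add)
  next
    case (equiv b' b r)
    have "frac_add (frac_mult r b) F \<in> local_ring V q"
      using equiv.prems equiv.hyps(2) F_local q by (simp add: local_ring_add local_ring_mult)
    then show ?case
      using local_ideal_gen.equiv[OF equiv.IH[OF equiv.prems] _ frac_eq_add_mult_cong[OF equiv.hyps(3)]]
      by blast
  qed
qed

lemma local_ideal_gen_subset:
  assumes "q \<in> toric_points V" "A \<subseteq> local_ring V q" "B \<subseteq> local_ideal_gen V q A"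
  shows "local_ideal_gen V q B \<subseteq> local_ideal_gen V q A"
proof
  fix F
  assume "F \<in> local_ideal_gen V q B"
  then show "F \<in> local_ideal_gen V q A"
    by (induction rule: local_ideal_gen.induct)
       (use assms in \<open>auto intro: local_ideal_gen.intros local_ideal_gen_closed\<close>)
qed

section \<open>Characters of groups of roots of unity\<close>

lemma card_roots_rsquarefree:
  fixes p :: "'K::field_char_0 poly"
  assumes alg_closed: "\<forall>p :: 'K poly. degree p > 0 \<longrightarrow> (\<exists>x. poly p x = 0)"
    and "rsquarefree p"
  shows "card {x. poly p x = 0} = degree p"
proof -
  have "card {x. poly p x = 0} = n"
    if "degree p = n" "\<forall>x. \<not> (poly p x = 0 \<and> poly (pderiv p) x = 0)" for n and p :: "'K poly"
    using that
  proof (induction n arbitrary: p)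
    case 0
    then have "pderiv p = 0"
      by (simp add: pderiv_eq_0_iff)
    then have "{x. poly p x = 0} = {}"
      using "0.prems"(2) by auto
    then show ?case
      by simp
  next
    case (Suc n)
    then obtain z where z: "poly p z = 0"
      using alg_closed by fastforce
    then obtain q where p: "p = [:- z, 1:] * q"
      using poly_eq_0_iff_dvd by blast
    then have "q \<noteq> 0"
      using Suc.prems(1) by auto
    then have "degree q = n"
      using Suc.prems(1) degree_mult_eq[of "[:- z, 1:]" q] by (simp add: p)
    have pderiv_p: "pderiv p = q + [:- z, 1:] * pderiv q"
      unfolding p pderiv_mult by (simp add: pderiv_pCons)
    have "poly q z \<noteq> 0"
      using Suc.prems(2) z pderiv_p by auto
    moreover have "\<forall>x. \<not> (poly q x = 0 \<and> poly (pderiv q) x = 0)"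
      using Suc.prems(2) unfolding pderiv_p by (auto simp: p)
    then have "card {x. poly q x = 0} = n"
      using Suc.IH \<open>degree q = n\<close> by blast
    moreover have "{x. poly p x = 0} = insert z {x. poly q x = 0}"
      by (auto simp: p)
    ultimately show ?case
      using poly_roots_finite[OF \<open>q \<noteq> 0\<close>] by simp
  qed
  then show ?thesis
    using assms(2) by (simp add: rsquarefree_roots)
qed

lemma card_roots_of_unity:
  assumes alg_closed: "\<forall>p :: 'K::field_char_0 poly. degree p > 0 \<longrightarrow> (\<exists>x. poly p x = 0)"
    and "n > 0"
  shows "card {x :: 'K. x ^ n = 1} = n"
proof -
  define p :: "'K poly" where "p = Polynomial.monom 1 n + [:-1:]"
  have poly_p: "poly p x = x ^ n - 1" for x
    by (simp add: p_def poly_monom)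
  have "degree p = n"
    using assms(2) by (simp add: p_def degree_add_eq_left degree_monom_eq)
  moreover have "rsquarefree p"
    using assms(2) by (auto simp: rsquarefree_roots poly_p p_def pderiv_add pderiv_monom poly_monom
                                   pderiv_pCons power_0_left)
  ultimately have "card {x. poly p x = 0} = n"
    using card_roots_rsquarefree[OF alg_closed] by simp
  then show ?thesis
    by (simp add: poly_p)
qed

lemma poly_eq_0_if_many_roots:
  fixes p :: "'K::field poly"
  assumes roots: "\<And>t. t \<in> G \<Longrightarrow> poly p t = 0" and "infinite G \<or> degree p < card G"
  shows "p = 0"
  using assms(2)
proof
  assume "infinite G"
  show "p = 0"
  proof (rule ccontr)
    assume "p \<noteq> 0"
    then have "finite {t. poly p t = 0}"
      by (rule poly_roots_finite)
    moreover have "G \<subseteq> {t. poly p t = 0}"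
      using roots by blast
    ultimately show False
      using \<open>infinite G\<close> finite_subset by blast
  qed
next
  assume "degree p < card G"
  then show "p = 0"
    using roots by (intro poly_eqI_degree[of G p 0]) auto
qed

lemma powi_sum_eq_0_imp_coeff_eq_0:
  fixes c :: "int \<Rightarrow> 'K::field"
  assumes E: "finite E" and G: "0 \<notin> G"
    and vanish: "\<And>t. t \<in> G \<Longrightarrow> (\<Sum>e\<in>E. c e * t powi e) = 0"
    and large: "infinite G \<or> E \<subseteq> {0..<int (card G)}"
    and e: "e \<in> E"
  shows "c e = 0"
proof -
  \<comment> \<open>multiplying by t^N clears the negative exponents\<close>
  define M where "M = Min (insert 0 E)"
  define N where "N = nat (- M)"
  have M_le: "M \<le> 0" "\<And>e. e \<in> E \<Longrightarrow> M \<le> e"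
    using E by (simp_all add: M_def)
  have shift: "0 \<le> e + int N" if "e \<in> E" for e
    using M_le that by (simp add: N_def)
  define p where "p = (\<Sum>e\<in>E. Polynomial.monom (c e) (nat (e + int N)))"
  have "poly p t = 0" if "t \<in> G" for t
  proof -
    have "t ^ nat (e + int N) = t powi e * t ^ N" if "e \<in> E" for e
      using shift[OF that] G \<open>t \<in> G\<close>
      by (metis power_int_add power_int_of_nat int_nat_eq nat_0_le)
    then have "poly p t = (\<Sum>e\<in>E. c e * t powi e) * t ^ N"
      by (simp add: p_def poly_sum poly_monom sum_distrib_right mult.assoc)
    then show ?thesis
      using vanish[OF that] by simp
  qed
  moreover have "infinite G \<or> degree p < card G"
    using large
  proof (rule disj_forward)
    assume small: "E \<subseteq> {0..<int (card G)}"
    then have "N = 0"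
      using E by (simp add: N_def M_def subset_iff)
    then show "degree p < card G"
      using small e E unfolding p_def
      by (intro le_less_trans[OF degree_sum_le[of _ _ "card G - 1"]])
         (force intro: order.trans[OF degree_monom_le])+
  qed
  ultimately have "p = 0"
    by (rule poly_eq_0_if_many_roots)
  have "coeff p (nat (e + int N)) = (\<Sum>e'\<in>E. if e' = e then c e' else 0)"
    unfolding p_def coeff_sum using shift e by (intro sum.cong refl) (auto simp: coeff_monom eq_nat_nat_iff)
  then show ?thesis
    using \<open>p = 0\<close> E e by simp
qed

lemma powi_eq_powi_mod:
  fixes t :: "'K::field"
  assumes "t \<noteq> 0" "t powi d = 1"
  shows "t powi k = t powi (k mod d)"
proof -
  have "t powi k = t powi (d * (k div d)) * t powi (k mod d)"
    using assms(1) by (simp add: power_int_add[symmetric])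
  then show ?thesis
    using assms(2) by (simp add: power_int_mult)
qed

lemma sum_powi_group_residues:
  fixes w :: "'x \<Rightarrow> 'K::field"
  assumes "finite X" "finite E" "(\<lambda>x. \<phi> x mod d) ` X \<subseteq> E" and "t \<noteq> 0" "t powi d = 1"
  shows "(\<Sum>x\<in>X. w x * t powi \<phi> x) = (\<Sum>e\<in>E. (\<Sum>x | x \<in> X \<and> \<phi> x mod d = e. w x) * t powi e)"
proof -
  have "(\<Sum>x\<in>X. w x * t powi \<phi> x) = (\<Sum>e\<in>E. \<Sum>x | x \<in> X \<and> \<phi> x mod d = e. w x * t powi \<phi> x)"
    using assms(1-3) by (simp add: sum.group)
  also have "\<dots> = (\<Sum>e\<in>E. (\<Sum>x | x \<in> X \<and> \<phi> x mod d = e. w x) * t powi e)"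
    unfolding sum_distrib_right using powi_eq_powi_mod[OF assms(4,5)] by (intro sum.cong refl) auto
  finally show ?thesis .
qed

text \<open>Characters of the group of d-th roots of unity (of K^* when d = 0) with exponents in
  different residue classes mod d are linearly independent.\<close>
lemma residue_sums_eq_if_powi_sums_eq:
  fixes w :: "'x \<Rightarrow> 'K::field_char_0" and \<phi> \<psi> :: "'x \<Rightarrow> int"
  assumes alg_closed: "\<forall>p :: 'K poly. degree p > 0 \<longrightarrow> (\<exists>x. poly p x = 0)"
    and "0 \<le> d" "finite X"
    and sums_eq: "\<And>t. t \<noteq> 0 \<Longrightarrow> t powi d = 1 \<Longrightarrow>
                    (\<Sum>x\<in>X. w x * t powi \<phi> x) = (\<Sum>x\<in>X. w x * t powi \<psi> x)"
  shows "(\<Sum>x | x \<in> X \<and> \<phi> x mod d = \<rho> mod d. w x) = (\<Sum>x | x \<in> X \<and> \<psi> x mod d = \<rho> mod d. w x)"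
proof -
  define G where "G = {t :: 'K. t \<noteq> 0 \<and> t powi d = 1}"
  define E where "E = insert (\<rho> mod d) ((\<lambda>x. \<phi> x mod d) ` X \<union> (\<lambda>x. \<psi> x mod d) ` X)"
  define c where "c e = (\<Sum>x | x \<in> X \<and> \<phi> x mod d = e. w x) - (\<Sum>x | x \<in> X \<and> \<psi> x mod d = e. w x)" for e
  have "finite E"
    using \<open>finite X\<close> by (simp add: E_def)
  have images: "(\<lambda>x. \<phi> x mod d) ` X \<subseteq> E" "(\<lambda>x. \<psi> x mod d) ` X \<subseteq> E"
    by (auto simp: E_def)
  have vanish: "(\<Sum>e\<in>E. c e * t powi e) = 0" if "t \<in> G" for t
  proof -
    have t: "t \<noteq> 0" "t powi d = 1"
      using that by (simp_all add: G_def)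
    have "(\<Sum>e\<in>E. c e * t powi e) = (\<Sum>x\<in>X. w x * t powi \<phi> x) - (\<Sum>x\<in>X. w x * t powi \<psi> x)"
      unfolding c_def left_diff_distrib sum_subtractf
      by (simp add: sum_powi_group_residues[OF \<open>finite X\<close> \<open>finite E\<close> images(1) t]
                    sum_powi_group_residues[OF \<open>finite X\<close> \<open>finite E\<close> images(2) t])
    then show ?thesis
      using sums_eq[OF t] by simp
  qed
  have large: "infinite G \<or> E \<subseteq> {0..<int (card G)}"
  proof (cases "d = 0")
    case True
    then have "G = UNIV - {0}"
      by (auto simp: G_def)
    then show ?thesis
      using infinite_UNIV_char_0 by auto
  next
    case False
    then have "G = {t. t ^ nat d = 1}"
      using \<open>0 \<le> d\<close> by (auto simp: G_def power_int_def power_0_left)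
    then have "card G = nat d"
      using card_roots_of_unity[OF alg_closed] False \<open>0 \<le> d\<close> by simp
    then show ?thesis
      using False \<open>0 \<le> d\<close> by (auto simp: E_def)
  qed
  have "c (\<rho> mod d) = 0"
    by (rule powi_sum_eq_0_imp_coeff_eq_0[OF \<open>finite E\<close> _ vanish large]) (simp_all add: G_def E_def)
  then show ?thesis
    by (simp add: c_def)
qed

section \<open>Weights and stabilizer of a point\<close>

definition weights :: "int^'n \<Rightarrow> ((int^'n) \<Rightarrow> 'K::zero) \<Rightarrow> int set" where
  "weights a q = {pairing a m | m. q m \<noteq> 0}"

lemma weights_zero: "q \<in> toric_points V \<Longrightarrow> 0 \<in> weights a q"
  by (auto simp: weights_def toric_points_def intro!: exI[of _ 0])

lemma weights_add:
  fixes q :: "(int^'n) \<Rightarrow> 'K::field"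
  assumes "q \<in> toric_points V" "c \<in> weights a q" "c' \<in> weights a q"
  shows "c + c' \<in> weights a q"
proof -
  obtain m m' where m: "c = pairing a m" "q m \<noteq> 0" "c' = pairing a m'" "q m' \<noteq> 0"
    using assms(2,3) by (auto simp: weights_def)
  then have "m \<in> dual_semigroup V" "m' \<in> dual_semigroup V"
    using assms(1) by (auto simp: toric_points_def)
  then have "q (m + m') = q m * q m'"
    using assms(1) by (simp add: toric_points_def)
  then show ?thesis
    using m by (auto simp: weights_def pairing_add intro!: exI[of _ "m + m'"])
qed

lemma stabilizer_eq_weights:
  "stabilizer a q = {t. t \<noteq> 0 \<and> (\<forall>c\<in>weights a q. t powi c = 1)}"
  by (force simp: stabilizer_def act_def weights_def fun_eq_iff)

lemma two_powi_eq_1_iff: "(2 :: 'K::field_char_0) powi k = 1 \<longleftrightarrow> k = 0"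
proof
  assume "(2 :: 'K) powi k = 1"
  then have "(2 :: 'K) ^ nat \<bar>k\<bar> = 1"
    by (cases "0 \<le> k") (auto simp: power_int_def field_simps)
  then have "(2 :: 'K) ^ nat \<bar>k\<bar> = of_nat 1"
    by simp
  then have "(2 :: nat) ^ nat \<bar>k\<bar> = 1"
    by (metis of_nat_eq_iff of_nat_numeral of_nat_power)
  then show "k = 0"
    by simp
qed simp

lemma weights_subset_zero_if_fixed:
  fixes q :: "(int^'n) \<Rightarrow> 'K::field_char_0"
  assumes "q \<in> fixed_pts V a"
  shows "weights a q \<subseteq> {0}"
proof -
  have "(2 :: 'K) \<in> stabilizer a q"
    using assms by (simp add: fixed_pts_def stabilizer_def)
  then show ?thesis
    by (auto simp: stabilizer_eq_weights two_powi_eq_1_iff)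
qed

text \<open>The limit point keeps the coordinates of weight 0 and kills those of positive weight.\<close>
lemma orbit_has_limit_at_0:
  fixes q :: "(int^'n) \<Rightarrow> 'K::field"
  assumes q: "q \<in> toric_points V" and nonneg: "\<forall>c\<in>weights b q. 0 \<le> c"
  shows "\<exists>p\<in>fixed_pts V b. has_limit_at_0 V (\<lambda>t. act b t q) p"
proof -
  have nonneg': "0 \<le> pairing b m" if "q m \<noteq> 0" for m
    using nonneg that by (auto simp: weights_def)
  define p where "p m = (if pairing b m = 0 then q m else 0)" for m
  have "p \<in> toric_points V"
    using q nonneg' by (auto simp: toric_points_def p_def pairing_add add_nonneg_eq_0_iff)
  moreover have "act b t p = p" for t
    by (auto simp: act_def p_def)
  moreover have "has_limit_at_0 V (\<lambda>t. act b t q) p"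
    unfolding has_limit_at_0_def
  proof (intro conjI exI[of _ "\<lambda>m. Polynomial.monom (q m) (nat (pairing b m))"] ballI allI impI)
    fix m and t :: 'K
    assume "t \<noteq> 0"
    show "poly (Polynomial.monom (q m) (nat (pairing b m))) t = act b t q m"
      using nonneg'[of m] by (cases "q m = 0") (auto simp: act_def poly_monom power_int_def)
  next
    fix m
    show "poly (Polynomial.monom (q m) (nat (pairing b m))) 0 = p m"
      using nonneg'[of m] by (cases "q m = 0") (auto simp: p_def poly_monom)
  qed fact
  ultimately show ?thesis
    by (auto simp: fixed_pts_def)
qed

lemma F_plus_if_weights_nonneg:
  "q \<in> toric_points V \<Longrightarrow> \<forall>c\<in>weights a q. 0 \<le> c \<Longrightarrow> q \<in> F_plus V a"
  using orbit_has_limit_at_0 by (auto simp: F_plus_def)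

lemma act_inverse: "act a (inverse s) x = act (- a) s x"
  by (simp add: act_def fun_eq_iff pairing_uminus_left power_int_inverse power_int_minus)

lemma fixed_pts_uminus: "fixed_pts V (- a) = fixed_pts V a"
proof -
  have iff: "(\<forall>t. t \<noteq> 0 \<longrightarrow> act (- a) t x = x) \<longleftrightarrow> (\<forall>t. t \<noteq> 0 \<longrightarrow> act a t x = x)" for x
    by (metis act_inverse inverse_inverse_eq inverse_nonzero_iff_nonzero)
  show ?thesis
    unfolding fixed_pts_def iff by (rule refl)
qed

lemma F_minus_if_weights_nonpos:
  assumes "q \<in> toric_points V" "\<forall>c\<in>weights a q. c \<le> 0"
  shows "q \<in> F_minus V a"
proof -
  have "\<forall>c\<in>weights (- a) q. 0 \<le> c"
    using assms(2) by (auto simp: weights_def pairing_uminus_left)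
  then obtain p where "p \<in> fixed_pts V (- a)" "has_limit_at_0 V (\<lambda>t. act (- a) t q) p"
    using orbit_has_limit_at_0[OF assms(1)] by blast
  then show ?thesis
    using assms(1) by (auto simp: F_minus_def act_inverse fixed_pts_uminus)
qed

lemma int_submonoid_of_nat_mult:
  fixes D :: "int set"
  assumes "0 \<in> D" "\<And>x y. x \<in> D \<Longrightarrow> y \<in> D \<Longrightarrow> x + y \<in> D" "y \<in> D"
  shows "int n * y \<in> D"
  by (induction n) (use assms in \<open>auto simp: distrib_right\<close>)

lemma int_submonoid_uminus_closed:
  fixes D :: "int set"
  assumes zero: "0 \<in> D" and add: "\<And>x y. x \<in> D \<Longrightarrow> y \<in> D \<Longrightarrow> x + y \<in> D"
    and neg: "n \<in> D" "n < 0" and pos: "p \<in> D" "0 < p"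
    and x: "x \<in> D"
  shows "- x \<in> D"
proof -
  note mult = int_submonoid_of_nat_mult[OF zero add]
  consider "x = 0" | "0 < x" | "x < 0"
    by linarith
  then show ?thesis
  proof cases
    case 2
    have "- x = int (nat (- n - 1)) * x + int (nat x) * n"
      using 2 neg(2) by (simp add: algebra_simps)
    then show ?thesis
      using add mult x neg(1) by metis
  next
    case 3
    have "- x = int (nat (p - 1)) * x + int (nat (- x)) * p"
      using 3 pos(2) by (simp add: algebra_simps)
    then show ?thesis
      using add mult x pos(1) by metis
  qed (use zero in simp)
qed

lemma int_subgroup_eq_multiples:
  fixes D :: "int set"
  assumes zero: "0 \<in> D" and add: "\<And>x y. x \<in> D \<Longrightarrow> y \<in> D \<Longrightarrow> x + y \<in> D"
    and uminus: "\<And>x. x \<in> D \<Longrightarrow> - x \<in> D"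
  shows "\<exists>d\<ge>0. D = {c. d dvd c}"
proof (cases "D \<subseteq> {0}")
  case True
  then show ?thesis
    using zero by (intro exI[of _ 0]) auto
next
  case False
  have mult: "k * y \<in> D" if "y \<in> D" for k y
    using int_submonoid_of_nat_mult[OF zero add that, of "nat k"]
      uminus[OF int_submonoid_of_nat_mult[OF zero add that, of "nat (- k)"]]
    by (cases "0 \<le> k") simp_all
  have "\<exists>n. 0 < n \<and> int n \<in> D"
  proof -
    obtain x where "x \<in> D" "x \<noteq> 0"
      using False by blast
    then show ?thesis
      using uminus[of x] by (intro exI[of _ "nat \<bar>x\<bar>"]) (auto simp: abs_if)
  qed
  define d where "d = int (LEAST n. 0 < n \<and> int n \<in> D)"
  have d: "0 < d" "d \<in> D"
    using LeastI_ex[OF \<open>\<exists>n. 0 < n \<and> int n \<in> D\<close>] by (simp_all add: d_def)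
  have least: "\<not> (0 < r \<and> r < d \<and> r \<in> D)" for r
    using not_less_Least[of "nat r" "\<lambda>n. 0 < n \<and> int n \<in> D"] by (auto simp: d_def)
  have "d dvd x" if "x \<in> D" for x
  proof -
    have "x + (- (x div d)) * d \<in> D"
      using add[OF that mult[OF d(2)]] .
    moreover have "x + (- (x div d)) * d = x mod d"
      by (simp add: minus_div_mult_eq_mod[symmetric])
    ultimately have "x mod d \<in> D"
      by (simp only:)
    then have "x mod d = 0"
      using least[of "x mod d"] d(1) pos_mod_sign[of d x] pos_mod_bound[of d x] by linarith
    then show ?thesis
      by (simp add: dvd_eq_mod_eq_0)
  qed
  moreover have "x \<in> D" if "d dvd x" for x
    using that mult[OF d(2)] by (auto simp: dvd_def mult.commute)
  ultimately show ?thesis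
    using d(1) by (intro exI[of _ d]) auto
qed

text \<open>Outside F_X^* the orbit has no limit at 0 or at \<infinity>, which forces weights of both signs
  unless all weights vanish.\<close>
lemma weights_eq_multiples:
  fixes q :: "(int^'n) \<Rightarrow> 'K::field_char_0"
  assumes q: "q \<in> toric_points V" and "q \<notin> F_star V a"
  shows "\<exists>d\<ge>0. weights a q = {c. d dvd c}"
proof (cases "weights a q \<subseteq> {0}")
  case True
  then show ?thesis
    using weights_zero[OF q] by (intro exI[of _ 0]) auto
next
  case False
  then have "q \<notin> fixed_pts V a"
    using weights_subset_zero_if_fixed by blast
  then have "q \<notin> F_plus V a" "q \<notin> F_minus V a"
    using assms(2) by (auto simp: F_star_def)
  then have "\<not> (\<forall>c\<in>weights a q. 0 \<le> c)" "\<not> (\<forall>c\<in>weights a q. c \<le> 0)"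
    using F_plus_if_weights_nonneg[OF q] F_minus_if_weights_nonpos[OF q] by blast+
  then obtain n p where n: "n \<in> weights a q" "n < 0" and p: "p \<in> weights a q" "0 < p"
    by (meson not_le)
  show ?thesis
    by (rule int_subgroup_eq_multiples[OF weights_zero[OF q] weights_add[OF q]
          int_submonoid_uminus_closed[OF weights_zero[OF q] weights_add[OF q] n p]])
qed

lemma stabilizer_eq_roots_of_unity:
  fixes q :: "(int^'n) \<Rightarrow> 'K::field"
  assumes "weights a q = {c. d dvd c}"
  shows "stabilizer a q = {t. t \<noteq> 0 \<and> t powi d = 1}"
proof -
  have "(\<forall>c\<in>{c. d dvd c}. t powi c = 1) \<longleftrightarrow> t powi d = 1" for t :: 'K
  proof
    assume "t powi d = 1"
    then show "\<forall>c\<in>{c. d dvd c}. t powi c = 1"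
      by (auto simp: power_int_mult elim!: dvdE)
  qed simp
  then show ?thesis
    unfolding stabilizer_eq_weights assms by blast
qed

section \<open>Semi-invariant fractions\<close>

definition residue_part :: "int^'n \<Rightarrow> int \<Rightarrow> int \<Rightarrow> ((int^'n) \<Rightarrow>\<^sub>0 'K::zero) \<Rightarrow> ((int^'n) \<Rightarrow>\<^sub>0 'K)" where
  "residue_part a d \<rho> = Poly_Mapping.mapp (\<lambda>m c. if pairing a m mod d = \<rho> mod d then c else 0)"

lemma lookup_residue_part:
  "Poly_Mapping.lookup (residue_part a d \<rho> f) m
     = (if pairing a m mod d = \<rho> mod d then Poly_Mapping.lookup f m else 0)"
  by (simp add: residue_part_def lookup_mapp when_def in_keys_iff)

lemma keys_residue_part_subset: "Poly_Mapping.keys (residue_part a d \<rho> f) \<subseteq> Poly_Mapping.keys f"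
  by (simp add: residue_part_def keys_mapp_subset)

lemma residue_part_in_coord_ring: "f \<in> coord_ring V \<Longrightarrow> residue_part a d \<rho> f \<in> coord_ring V"
  using keys_residue_part_subset unfolding coord_ring_def by blast

lemma eval_at_residue_part_0:
  assumes "\<forall>c\<in>weights a q. c mod d = 0"
  shows "eval_at (residue_part a d 0 h) q = eval_at h q"
proof -
  have "eval_at (residue_part a d 0 h) q
      = (\<Sum>m\<in>Poly_Mapping.keys h. Poly_Mapping.lookup (residue_part a d 0 h) m * q m)"
    by (intro eval_at_eq_sum_superset) (simp_all add: keys_residue_part_subset)
  also have "\<dots> = eval_at h q"
    using assms unfolding eval_at_def lookup_residue_part by (intro sum.cong refl) (auto simp: weights_def)
  finally show ?thesis .
qed

text \<open>Comparing the coefficients of z^k on both sides of t^*g \<cdot> h = t^\<alpha> g \<cdot> t^*h gives an identity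
  between sums of characters of the stabilizer, which splits along residues mod d.\<close>
lemma semi_invariant_residue_parts:
  fixes g h :: "(int^'n) \<Rightarrow>\<^sub>0 'K::field_char_0"
  assumes alg_closed: "\<forall>p :: 'K poly. degree p > 0 \<longrightarrow> (\<exists>x. poly p x = 0)"
    and "0 \<le> d"
    and semi: "\<And>t. t \<noteq> 0 \<Longrightarrow> t powi d = 1 \<Longrightarrow> tstar a t g * h = scal (t powi \<alpha>) g * tstar a t h"
  shows "residue_part a d \<alpha> g * h = g * residue_part a d 0 h"
proof (rule poly_mapping_eqI)
  fix k
  let ?X = "Poly_Mapping.keys g \<times> Poly_Mapping.keys h"
  define w where "w = (\<lambda>(l, p). if l + p = k then Poly_Mapping.lookup g l * Poly_Mapping.lookup h p else 0)"
  define \<phi> :: "(int^'n) \<times> (int^'n) \<Rightarrow> int" where "\<phi> = (\<lambda>(l, p). pairing a l)"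
  define \<psi> :: "(int^'n) \<times> (int^'n) \<Rightarrow> int" where "\<psi> = (\<lambda>(l, p). \<alpha> + pairing a p)"
  have lookup_prod: "Poly_Mapping.lookup (f' * h') k = (\<Sum>x\<in>?X. w x * (u (fst x) * v (snd x)))"
    if "\<And>l. Poly_Mapping.lookup f' l = u l * Poly_Mapping.lookup g l"
       "\<And>p. Poly_Mapping.lookup h' p = v p * Poly_Mapping.lookup h p" for f' h' u v
    by (subst lookup_mult_rescaled[OF _ _ _ _ that]) (simp_all add: w_def split_def)
  have "(\<Sum>x\<in>?X. w x * t powi \<phi> x) = (\<Sum>x\<in>?X. w x * t powi \<psi> x)" if "t \<noteq> 0" "t powi d = 1" for t
  proof -
    have "(\<Sum>x\<in>?X. w x * t powi \<phi> x) = Poly_Mapping.lookup (tstar a t g * h) k"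
      by (subst lookup_prod[where u = "\<lambda>l. t powi pairing a l" and v = "\<lambda>_. 1"])
         (simp_all add: lookup_tstar \<phi>_def split_def)
    also have "\<dots> = Poly_Mapping.lookup (scal (t powi \<alpha>) g * tstar a t h) k"
      using semi[OF that] by simp
    also have "\<dots> = (\<Sum>x\<in>?X. w x * t powi \<psi> x)"
      by (subst lookup_prod[where u = "\<lambda>_. t powi \<alpha>" and v = "\<lambda>p. t powi pairing a p"])
         (simp_all add: lookup_tstar lookup_scal \<psi>_def split_def power_int_add \<open>t \<noteq> 0\<close>)
    finally show ?thesis .
  qed
  then have "(\<Sum>x | x \<in> ?X \<and> \<phi> x mod d = \<alpha> mod d. w x) = (\<Sum>x | x \<in> ?X \<and> \<psi> x mod d = \<alpha> mod d. w x)"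
    by (intro residue_sums_eq_if_powi_sums_eq[OF alg_closed \<open>0 \<le> d\<close>]) auto
  moreover have "Poly_Mapping.lookup (residue_part a d \<alpha> g * h) k
      = (\<Sum>x | x \<in> ?X \<and> \<phi> x mod d = \<alpha> mod d. w x)"
    by (subst lookup_prod[where u = "\<lambda>l. if pairing a l mod d = \<alpha> mod d then 1 else 0" and v = "\<lambda>_. 1"])
       (auto simp: lookup_residue_part \<phi>_def sum.inter_filter intro!: sum.cong)
  moreover have "(\<alpha> + c) mod d = \<alpha> mod d \<longleftrightarrow> c mod d = 0 mod d" for c
    by (simp add: mod_eq_dvd_iff dvd_eq_mod_eq_0)
  then have "Poly_Mapping.lookup (g * residue_part a d 0 h) k
      = (\<Sum>x | x \<in> ?X \<and> \<psi> x mod d = \<alpha> mod d. w x)"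
    by (subst lookup_prod[where u = "\<lambda>_. 1" and v = "\<lambda>p. if pairing a p mod d = 0 mod d then 1 else 0"])
       (auto simp: lookup_residue_part \<psi>_def sum.inter_filter intro!: sum.cong)
  ultimately show "Poly_Mapping.lookup (residue_part a d \<alpha> g * h) k
      = Poly_Mapping.lookup (g * residue_part a d 0 h) k"
    by simp
qed

text \<open>c z^m / h = c z^(m+u) / (h z^u), where z^u is a unit at q of weight \<alpha> - (a,m), so that
  z^(m+u) is a generator of H.\<close>
lemma H_stalk_add_monomial:
  fixes h :: "(int^'n) \<Rightarrow>\<^sub>0 'K::field"
  assumes q: "q \<in> toric_points V" and h: "h \<in> coord_ring V" "eval_at h q \<noteq> 0"
    and S: "S \<in> coord_ring V" "(S, h) \<in> H_stalk V a \<alpha> q"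
    and m: "m \<in> dual_semigroup V" "\<alpha> - pairing a m \<in> weights a q"
  shows "(Poly_Mapping.single m c + S, h) \<in> H_stalk V a \<alpha> q"
proof -
  obtain u where u: "q u \<noteq> 0" "pairing a u = \<alpha> - pairing a m"
    using m(2) by (auto simp: weights_def)
  then have u_dual: "u \<in> dual_semigroup V"
    using q by (auto simp: toric_points_def)
  have gen: "(monom (m + u), 1) \<in> {(h, 1) |h. h \<in> H_gens V a \<alpha>}"
    using add_in_dual_semigroup[OF m(1) u_dual] u(2) by (auto simp: H_gens_def pairing_add)
  have "eval_at (h * monom u) q = eval_at h q * q u"
    using eval_at_mult[OF h(1) coord_ring_monom[OF u_dual] q] by (simp add: monom_def eval_at_single)
  then have coeff: "(Poly_Mapping.single 0 c, h * monom u) \<in> local_ring V q"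
    using h u(1) coord_ring_mult[OF h(1) coord_ring_monom[OF u_dual]]
    by (simp add: local_ring_def coord_ring_single)
  have "frac_add (frac_mult (Poly_Mapping.single 0 c, h * monom u) (monom (m + u), 1)) (S, h)
      \<in> H_stalk V a \<alpha> q"
    using S(2) unfolding H_stalk_def by (rule local_ideal_gen.step[OF coeff gen])
  moreover have "(Poly_Mapping.single m c + S, h) \<in> local_ring V q"
    using h S(1) m(1) by (simp add: local_ring_def coord_ring_add coord_ring_single)
  moreover have "Poly_Mapping.single 0 c * monom (m + u) = Poly_Mapping.single m c * monom u"
    by (simp add: monom_def mult_single add.commute)
  then have "frac_eq (Poly_Mapping.single m c + S, h)
      (frac_add (frac_mult (Poly_Mapping.single 0 c, h * monom u) (monom (m + u), 1)) (S, h))"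
    by (simp add: frac_eq_def frac_add_def frac_mult_def algebra_simps)
  ultimately show ?thesis
    unfolding H_stalk_def by (rule local_ideal_gen.equiv)
qed

lemma sum_monomials_in_H_stalk:
  fixes h :: "(int^'n) \<Rightarrow>\<^sub>0 'K::field"
  assumes q: "q \<in> toric_points V" and h: "h \<in> coord_ring V" "eval_at h q \<noteq> 0"
    and "finite M" "M \<subseteq> dual_semigroup V" "\<And>m. m \<in> M \<Longrightarrow> \<alpha> - pairing a m \<in> weights a q"
  shows "(\<Sum>m\<in>M. Poly_Mapping.single m (c m), h) \<in> H_stalk V a \<alpha> q"
  using assms(4-6)
proof (induction M rule: finite_induct)
  case empty
  have "(0, h) \<in> local_ring V q"
    using h by (simp add: local_ring_def)
  then show ?case
    unfolding H_stalk_def by (auto intro: local_ideal_gen.equiv[OF local_ideal_gen.zero] simp: frac_eq_def)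
next
  case (insert m M)
  have "(\<Sum>m\<in>M. Poly_Mapping.single m (c m)) \<in> coord_ring V"
    using insert.prems(1) by (intro coord_ring_sum coord_ring_single) auto
  then show ?case
    using insert H_stalk_add_monomial[OF q h] by simp
qed

lemma semi_invariant_in_H_stalk:
  fixes q :: "(int^'n) \<Rightarrow> 'K::field_char_0"
  assumes alg_closed: "\<forall>p :: 'K poly. degree p > 0 \<longrightarrow> (\<exists>x. poly p x = 0)"
    and q: "q \<in> toric_points V" and d: "0 \<le> d" "weights a q = {c. d dvd c}"
    and F: "F \<in> semi_inv_local V a \<alpha> q"
  shows "F \<in> H_stalk V a \<alpha> q"
proof -
  obtain g h where F_eq: "F = (g, h)"
    by (cases F)
  have F_local: "(g, h) \<in> local_ring V q"
    using F by (simp add: F_eq semi_inv_local_def)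
  then have g: "g \<in> coord_ring V" and h: "h \<in> coord_ring V" "eval_at h q \<noteq> 0"
    by (simp_all add: local_ring_def)
  have "tstar a t g * h = scal (t powi \<alpha>) g * tstar a t h" if "t \<noteq> 0" "t powi d = 1" for t
    using F that stabilizer_eq_roots_of_unity[OF d(2)]
    by (auto simp: F_eq semi_inv_local_def frac_eq_def)
  then have parts: "residue_part a d \<alpha> g * h = g * residue_part a d 0 h"
    by (rule semi_invariant_residue_parts[OF alg_closed d(1)])
  let ?g = "residue_part a d \<alpha> g" and ?h = "residue_part a d 0 h"
  have h': "?h \<in> coord_ring V" "eval_at ?h q \<noteq> 0"
    using h d(2) by (simp_all add: residue_part_in_coord_ring eval_at_residue_part_0 dvd_eq_mod_eq_0)
  have "\<alpha> - pairing a m \<in> weights a q" if "m \<in> Poly_Mapping.keys ?g" for m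
  proof -
    have "pairing a m mod d = \<alpha> mod d"
      using that by (auto simp: in_keys_iff lookup_residue_part split: if_splits)
    then show ?thesis
      by (simp add: d(2) mod_eq_dvd_iff dvd_diff_commute)
  qed
  moreover have "Poly_Mapping.keys ?g \<subseteq> dual_semigroup V"
    using residue_part_in_coord_ring[OF g] by (simp add: coord_ring_def)
  ultimately have "(\<Sum>m\<in>Poly_Mapping.keys ?g. Poly_Mapping.single m (Poly_Mapping.lookup ?g m), ?h)
      \<in> H_stalk V a \<alpha> q"
    by (intro sum_monomials_in_H_stalk[OF q h']) auto
  then have "(?g, ?h) \<in> H_stalk V a \<alpha> q"
    using poly_mapping_eq_sum_single[of "Poly_Mapping.keys ?g" ?g] by simp
  then show ?thesis
    using F_local parts unfolding F_eq H_stalk_def by (auto intro: local_ideal_gen.equiv simp: frac_eq_def)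
qed

lemma H_stalk_eq_J_ideal:
  fixes q :: "(int^'n) \<Rightarrow> 'K::field_char_0"
  assumes alg_closed: "\<forall>p :: 'K poly. degree p > 0 \<longrightarrow> (\<exists>x. poly p x = 0)"
    and q: "q \<in> toric_points V" and "q \<notin> F_star V a"
  shows "H_stalk V a \<alpha> q = J_ideal V a \<alpha> q"
proof -
  obtain d where d: "0 \<le> d" "weights a q = {c. d dvd c}"
    using weights_eq_multiples[OF q \<open>q \<notin> F_star V a\<close>] by blast
  let ?A = "{(h, 1) |h. h \<in> H_gens V a \<alpha>} :: (((int^'n) \<Rightarrow>\<^sub>0 'K) \<times> ((int^'n) \<Rightarrow>\<^sub>0 'K)) set"
  have gens_local: "?A \<subseteq> local_ring V q"
    using q by (auto simp: H_gens_def local_ring_def coord_ring_monom eval_at_one)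
  have "tstar a t (monom m) = scal (t powi pairing a m) (monom m)" for t m
    unfolding tstar_monom by (simp add: scal_def monom_def mult_single)
  then have gens_semi_invariant: "?A \<subseteq> semi_inv_local V a \<alpha> q"
    using q by (auto simp: H_gens_def semi_inv_local_def frac_eq_def tstar_one local_ring_def
                           coord_ring_monom eval_at_one)
  show ?thesis
  proof
    show "H_stalk V a \<alpha> q \<subseteq> J_ideal V a \<alpha> q"
      unfolding H_stalk_def J_ideal_def by (rule local_ideal_gen_mono[OF gens_semi_invariant])
    show "J_ideal V a \<alpha> q \<subseteq> H_stalk V a \<alpha> q"
      unfolding J_ideal_def H_stalk_def
      using semi_invariant_in_H_stalk[OF alg_closed q d] gens_local
      by (intro local_ideal_gen_subset[OF q]) (auto simp: H_stalk_def)
  qed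
qed

theorem mainTheorem8:
  fixes V :: "(int^'n) set" and a :: "int^'n" and \<alpha> :: int
    and K_witness :: "'K::field_char_0 itself"
  assumes alg_closed: "\<forall>p :: 'K poly. degree p > 0 \<longrightarrow> (\<exists>x. poly p x = 0)"
    and nonsing: "nonsingular_gens V"
  shows "(\<exists>B. finite B \<and> B \<subseteq> coord_ring V \<and>
             ring_ideal_gen V B = ring_ideal_gen V (H_gens V a \<alpha> :: ((int^'n) \<Rightarrow>\<^sub>0 'K) set))
       \<and> (\<forall>t::'K. t \<noteq> 0 \<longrightarrow> (\<forall>f\<in>ring_ideal_gen V (H_gens V a \<alpha>).
             tstar a t f \<in> ring_ideal_gen V (H_gens V a \<alpha>)))
       \<and> (\<forall>q :: (int^'n) \<Rightarrow> 'K. q \<in> toric_points V - F_star V a \<longrightarrow>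
             H_stalk V a \<alpha> q = J_ideal V a \<alpha> q)"
proof (intro conjI allI impI ballI)
  have "finite V"
    using nonsing by (auto simp: nonsingular_gens_def Z_basis_def intro: finite_subset)
  then obtain F where F: "F \<subseteq> {m \<in> dual_semigroup V. pairing a m = \<alpha>}" "finite F"
    "ring_ideal_gen V (monom ` F) = ring_ideal_gen V (H_gens V a \<alpha> :: ((int^'n) \<Rightarrow>\<^sub>0 'K) set)"
    using monomial_ideal_finitely_generated[of V "{m \<in> dual_semigroup V. pairing a m = \<alpha>}"]
    unfolding H_gens_eq_image by blast
  then show "\<exists>B. finite B \<and> B \<subseteq> coord_ring V \<and>
      ring_ideal_gen V B = ring_ideal_gen V (H_gens V a \<alpha> :: ((int^'n) \<Rightarrow>\<^sub>0 'K) set)"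
    by (intro exI[of _ "monom ` F"]) (auto intro: coord_ring_monom)
qed (simp_all add: tstar_in_H_ideal H_stalk_eq_J_ideal[OF alg_closed])

end
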